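(* For any simple undirected graph $G$, the quantity $$\Lambda_1=\sum_{\{st,uv\}\in Q}\big(a_{su}(k_t+k_v)+a_{sv}(k_t+k_u)+a_{tu}(k_s+k_v)+a_{tv}(k_s+k_u)\big)$$ satisfies $$\Lambda_1=\sum_{st\in E}\Big((k_t-1)(\xi(s)-k_t)+(k_s-1)(\xi(t)-k_s)-2S_{s,t}\Big).$$
   Context: $a_{ij}$ adjacency entries, $k_x$ degree, $\Gamma(x)$ neighbourhood, $\xi(s)=\sum_{t\in\Gamma(s)}k_t$, $c(s,t)=\Gamma(s)\cap\Gamma(t)$, $S_{s,t}=\sum_{u\in c(s,t)}k_u$. $Q$ is the set of unordered pairs $\{st,uv\}$ of edges with $s,t,u,v$ pairwise distinct. *)

theory Defs
  imports Main
begin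

(* A simple undirected graph is given by a finite vertex set V and an
   adjacency relation adj (symmetric, irreflexive, supported on V). *)

definition adjm :: "('a \<Rightarrow> 'a \<Rightarrow> bool) \<Rightarrow> 'a \<Rightarrow> 'a \<Rightarrow> int" where
  "adjm adj i j = (if adj i j then 1 else 0)"

definition nbhd :: "'a set \<Rightarrow> ('a \<Rightarrow> 'a \<Rightarrow> bool) \<Rightarrow> 'a \<Rightarrow> 'a set" where
  "nbhd V adj x = {y \<in> V. adj x y}"

definition deg :: "'a set \<Rightarrow> ('a \<Rightarrow> 'a \<Rightarrow> bool) \<Rightarrow> 'a \<Rightarrow> int" where
  "deg V adj x = int (card (nbhd V adj x))"

definition xi :: "'a set \<Rightarrow> ('a \<Rightarrow> 'a \<Rightarrow> bool) \<Rightarrow> 'a \<Rightarrow> int" where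
  "xi V adj s = (\<Sum>t\<in>nbhd V adj s. deg V adj t)"

definition common :: "'a set \<Rightarrow> ('a \<Rightarrow> 'a \<Rightarrow> bool) \<Rightarrow> 'a \<Rightarrow> 'a \<Rightarrow> 'a set" where
  "common V adj s t = nbhd V adj s \<inter> nbhd V adj t"

definition Ssum :: "'a set \<Rightarrow> ('a \<Rightarrow> 'a \<Rightarrow> bool) \<Rightarrow> 'a \<Rightarrow> 'a \<Rightarrow> int" where
  "Ssum V adj s t = (\<Sum>u\<in>common V adj s t. deg V adj u)"

definition edges :: "'a set \<Rightarrow> ('a \<Rightarrow> 'a \<Rightarrow> bool) \<Rightarrow> 'a set set" where
  "edges V adj = {{s, t} | s t. s \<in> V \<and> t \<in> V \<and> adj s t}"

definition Qpairs :: "'a set \<Rightarrow> ('a \<Rightarrow> 'a \<Rightarrow> bool) \<Rightarrow> 'a set set set" where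
  "Qpairs V adj = {{{s, t}, {u, v}} | s t u v.
      s \<in> V \<and> t \<in> V \<and> u \<in> V \<and> v \<in> V \<and> adj s t \<and> adj u v \<and> distinct [s, t, u, v]}"

definition lam_term :: "'a set \<Rightarrow> ('a \<Rightarrow> 'a \<Rightarrow> bool) \<Rightarrow> 'a \<Rightarrow> 'a \<Rightarrow> 'a \<Rightarrow> 'a \<Rightarrow> int" where
  "lam_term V adj s t u v =
     adjm adj s u * (deg V adj t + deg V adj v) + adjm adj s v * (deg V adj t + deg V adj u)
   + adjm adj t u * (deg V adj s + deg V adj v) + adjm adj t v * (deg V adj s + deg V adj u)"

(* The summand is invariant under the labelings of a pair {st,uv}, so any
   representative labeling (chosen via SOME) gives the same value. *)
definition Lambda1 :: "'a set \<Rightarrow> ('a \<Rightarrow> 'a \<Rightarrow> bool) \<Rightarrow> int" where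
  "Lambda1 V adj = (\<Sum>q\<in>Qpairs V adj.
     (case (SOME (s, t, u, v). q = {{s, t}, {u, v}} \<and> adj s t \<and> adj u v \<and> distinct [s, t, u, v])
      of (s, t, u, v) \<Rightarrow> lam_term V adj s t u v))"

definition edge_term :: "'a set \<Rightarrow> ('a \<Rightarrow> 'a \<Rightarrow> bool) \<Rightarrow> 'a \<Rightarrow> 'a \<Rightarrow> int" where
  "edge_term V adj s t =
     (deg V adj t - 1) * (xi V adj s - deg V adj t) + (deg V adj s - 1) * (xi V adj t - deg V adj s)
     - 2 * Ssum V adj s t"

end

theory Submission
  imports Defs
begin

text \<open>Each pair \<open>{st,uv} \<in> Q\<close> has exactly eight labellings \<open>(s,t,u,v)\<close>, and its summand does
  not depend on the labelling, so \<open>8 \<Lambda>\<^sub>1\<close> is a sum over labelled quadruples. There the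
  summand splits into eight terms of the form \<open>a\<^sub>s\<^sub>u k\<^sub>t\<close> which the relabellings permute, so
  \<open>\<Lambda>\<^sub>1\<close> is the sum of \<open>k\<^sub>t\<close> over the paths \<open>t s u v\<close> on four distinct vertices. For a fixed
  arc \<open>(s,u)\<close>, a vertex \<open>t \<in> \<Gamma>(s) - {u}\<close> extends to \<open>k\<^sub>u - 1 - a\<^sub>u\<^sub>t\<close> such paths, giving
  \<open>(k\<^sub>u - 1)(\<xi>(s) - k\<^sub>u) - S\<^sub>s\<^sub>,\<^sub>u\<close>; each edge collects this for both of its orientations.\<close>

lemma sum_image_const_fibres:
  fixes h :: "'a \<Rightarrow> 'b::comm_semiring_1"
  assumes "finite A"
    and "\<And>x. x \<in> A \<Longrightarrow> card {y \<in> A. g y = g x} = n"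
    and "\<And>x. x \<in> A \<Longrightarrow> F (g x) = h x"
  shows "(\<Sum>x\<in>A. h x) = of_nat n * (\<Sum>z\<in>g ` A. F z)"
proof -
  have "(\<Sum>x\<in>A. h x) = (\<Sum>z\<in>g ` A. \<Sum>x\<in>{y \<in> A. g y = z}. h x)"
    by (rule sum.group[OF assms(1) finite_imageI[OF assms(1)] subset_refl, symmetric])
  also have "\<dots> = (\<Sum>z\<in>g ` A. of_nat n * F z)"
  proof (rule sum.cong[OF refl])
    fix z assume "z \<in> g ` A"
    then obtain x where x: "x \<in> A" "z = g x" by blast
    have "(\<Sum>y\<in>{y \<in> A. g y = z}. h y) = (\<Sum>y\<in>{y \<in> A. g y = z}. F z)"
      using assms(3) by (intro sum.cong) auto
    then show "(\<Sum>y\<in>{y \<in> A. g y = z}. h y) = of_nat n * F z"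
      using assms(2)[OF x(1)] x(2) by simp
  qed
  finally show ?thesis by (simp add: sum_distrib_left)
qed

lemma sum_sum_list_bij_betw:
  fixes f :: "'a \<Rightarrow> 'b::comm_semiring_1"
  assumes "\<And>g. g \<in> set gs \<Longrightarrow> bij_betw g A A"
  shows "(\<Sum>x\<in>A. \<Sum>g\<leftarrow>gs. f (g x)) = of_nat (length gs) * sum f A"
  using assms
proof (induction gs)
  case Nil
  then show ?case by simp
next
  case (Cons g gs)
  have "(\<Sum>x\<in>A. f (g x)) = sum f A"
    using sum.reindex_bij_betw[OF Cons.prems[of g]] by simp
  with Cons show ?case by (simp add: sum.distrib algebra_simps)
qed

definition relabellings :: "('a \<times> 'a \<times> 'a \<times> 'a \<Rightarrow> 'a \<times> 'a \<times> 'a \<times> 'a) list" where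
  "relabellings =
     [\<lambda>(s,t,u,v). (s,t,u,v), \<lambda>(s,t,u,v). (t,s,u,v), \<lambda>(s,t,u,v). (s,t,v,u), \<lambda>(s,t,u,v). (t,s,v,u),
      \<lambda>(s,t,u,v). (u,v,s,t), \<lambda>(s,t,u,v). (v,u,s,t), \<lambda>(s,t,u,v). (u,v,t,s), \<lambda>(s,t,u,v). (v,u,t,s)]"

lemma inj_relabelling: "g \<in> set relabellings \<Longrightarrow> inj g"
  by (auto simp: relabellings_def inj_def)

lemma doubleton_pair_eq_iff_relabelling:
  "{{a,b},{c,d}} = {{s,t},{u,v}} \<longleftrightarrow> (a,b,c,d) \<in> (\<lambda>g. g (s,t,u,v)) ` set relabellings"
  by (auto simp: relabellings_def doubleton_eq_iff)

lemma length_relabellings: "length relabellings = 8"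
  by (simp add: relabellings_def)

lemma card_relabellings:
  assumes "distinct [s,t,u,v]"
  shows "card ((\<lambda>g. g (s,t,u,v)) ` set relabellings) = 8"
proof -
  have "distinct (map (\<lambda>g. g (s,t,u,v)) relabellings)"
    using assms by (auto simp: relabellings_def)
  then show ?thesis
    using distinct_card length_relabellings by fastforce
qed

locale finite_simple_graph =
  fixes V :: "'a set" and adj :: "'a \<Rightarrow> 'a \<Rightarrow> bool"
  assumes finite_V: "finite V"
    and adj_sym: "adj x y \<Longrightarrow> adj y x"
    and adj_irrefl: "\<not> adj x x"
    and adj_in_V: "adj x y \<Longrightarrow> x \<in> V \<and> y \<in> V"
begin

lemma mem_nbhd_iff [simp]: "y \<in> nbhd V adj x \<longleftrightarrow> adj x y"
  using adj_in_V by (auto simp: nbhd_def)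

lemma finite_nbhd [simp]: "finite (nbhd V adj x)"
  using finite_V by (simp add: nbhd_def)

lemma adj_commute: "adj x y \<longleftrightarrow> adj y x"
  using adj_sym by blast

lemma adjm_commute: "adjm adj x y = adjm adj y x"
  by (simp add: adjm_def adj_commute)

lemma Ssum_commute: "Ssum V adj s t = Ssum V adj t s"
  by (simp add: Ssum_def common_def Int_commute)

lemma edge_term_commute: "edge_term V adj s t = edge_term V adj t s"
  by (simp add: edge_term_def Ssum_commute)

definition arcs :: "('a \<times> 'a) set" where
  "arcs = {(s, t). adj s t}"

lemma finite_arcs: "finite arcs"
  by (rule finite_subset[of _ "V \<times> V"]) (use adj_in_V finite_V in \<open>auto simp: arcs_def\<close>)

lemma edges_eq_image_arcs: "edges V adj = (\<lambda>(s, t). {s, t}) ` arcs"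
  using adj_in_V by (auto simp: edges_def arcs_def)

lemma edge_summand_eq:
  assumes "adj x y"
  shows "(case (SOME (s, t). {x, y} = {s, t} \<and> adj s t) of (s, t) \<Rightarrow> edge_term V adj s t)
    = edge_term V adj x y"
proof (rule someI2[of _ "(x, y)"])
  show "case (x, y) of (s, t) \<Rightarrow> {x, y} = {s, t} \<and> adj s t"
    using assms by simp
  fix q assume "case q of (s, t) \<Rightarrow> {x, y} = {s, t} \<and> adj s t"
  then show "(case q of (s, t) \<Rightarrow> edge_term V adj s t) = edge_term V adj x y"
    by (cases q) (auto simp: doubleton_eq_iff edge_term_commute)
qed

lemma double_sum_edges_eq_sum_arcs:
  "2 * (\<Sum>e\<in>edges V adj. (case (SOME (s, t). e = {s, t} \<and> adj s t) of (s, t) \<Rightarrow> edge_term V adj s t))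
   = (\<Sum>(s, t)\<in>arcs. edge_term V adj s t)"
proof -
  have "(\<Sum>(s, t)\<in>arcs. edge_term V adj s t) = of_nat 2 * (\<Sum>e\<in>(\<lambda>(s, t). {s, t}) ` arcs.
          (case (SOME (s, t). e = {s, t} \<and> adj s t) of (s, t) \<Rightarrow> edge_term V adj s t))"
  proof (rule sum_image_const_fibres[OF finite_arcs])
    fix p assume "p \<in> arcs"
    then obtain x y where p: "p = (x, y)" "adj x y" by (auto simp: arcs_def)
    have "{q \<in> arcs. (\<lambda>(s, t). {s, t}) q = {x, y}} = {(x, y), (y, x)}"
      using p(2) adj_sym by (auto simp: arcs_def doubleton_eq_iff)
    moreover have "x \<noteq> y"
      using p(2) adj_irrefl by blast
    ultimately show "card {q \<in> arcs. (\<lambda>(s, t). {s, t}) q = (\<lambda>(s, t). {s, t}) p} = 2"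
      using p(1) by simp
    show "(case (SOME (s, t). (\<lambda>(s, t). {s, t}) p = {s, t} \<and> adj s t) of (s, t) \<Rightarrow> edge_term V adj s t)
        = (case p of (s, t) \<Rightarrow> edge_term V adj s t)"
      using edge_summand_eq[OF p(2)] p(1) by simp
  qed
  then show ?thesis
    by (simp add: edges_eq_image_arcs)
qed

definition quads :: "('a \<times> 'a \<times> 'a \<times> 'a) set" where
  "quads = {(s, t, u, v). adj s t \<and> adj u v \<and> distinct [s, t, u, v]}"

lemma finite_quads: "finite quads"
  by (rule finite_subset[of _ "V \<times> V \<times> V \<times> V"])
    (use adj_in_V finite_V in \<open>auto simp: quads_def\<close>)

lemma Qpairs_eq_image_quads: "Qpairs V adj = (\<lambda>(s, t, u, v). {{s, t}, {u, v}}) ` quads"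
proof -
  have "Qpairs V adj = {{{s, t}, {u, v}} | s t u v. adj s t \<and> adj u v \<and> distinct [s, t, u, v]}"
    unfolding Qpairs_def using adj_in_V by meson
  also have "\<dots> = (\<lambda>(s, t, u, v). {{s, t}, {u, v}}) ` quads"
    unfolding quads_def by (auto simp: image_iff)
  finally show ?thesis .
qed

lemma relabelling_in_quads: "g \<in> set relabellings \<Longrightarrow> p \<in> quads \<Longrightarrow> g p \<in> quads"
  by (auto simp: relabellings_def quads_def adj_commute)

lemma bij_betw_relabelling:
  assumes "g \<in> set relabellings"
  shows "bij_betw g quads quads"
proof -
  have "inj_on g quads"
    using inj_relabelling[OF assms] by (rule inj_on_subset) simp
  moreover have "g ` quads = quads"
    using relabelling_in_quads[OF assms] \<open>inj_on g quads\<close> by (intro endo_inj_surj finite_quads) auto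
  ultimately show ?thesis
    by (simp add: bij_betw_def)
qed

lemma quads_fibre:
  assumes "(s, t, u, v) \<in> quads"
  shows "{p \<in> quads. (\<lambda>(a, b, c, d). {{a, b}, {c, d}}) p = {{s, t}, {u, v}}}
    = (\<lambda>g. g (s, t, u, v)) ` set relabellings"
proof (intro equalityI subsetI)
  fix p assume "p \<in> {p \<in> quads. (\<lambda>(a, b, c, d). {{a, b}, {c, d}}) p = {{s, t}, {u, v}}}"
  then show "p \<in> (\<lambda>g. g (s, t, u, v)) ` set relabellings"
    by (cases p) (simp add: doubleton_pair_eq_iff_relabelling)
next
  fix p assume "p \<in> (\<lambda>g. g (s, t, u, v)) ` set relabellings"
  then obtain g where g: "g \<in> set relabellings" "p = g (s, t, u, v)"
    by blast
  then have "(\<lambda>(a, b, c, d). {{a, b}, {c, d}}) p = {{s, t}, {u, v}}"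
    by (auto simp: relabellings_def insert_commute)
  with relabelling_in_quads[OF g(1) assms] g(2)
  show "p \<in> {p \<in> quads. (\<lambda>(a, b, c, d). {{a, b}, {c, d}}) p = {{s, t}, {u, v}}}"
    by simp
qed

lemma lam_term_relabelling:
  "g \<in> set relabellings \<Longrightarrow> g (s, t, u, v) = (a, b, c, d)
   \<Longrightarrow> lam_term V adj a b c d = lam_term V adj s t u v"
  by (auto simp: relabellings_def lam_term_def adjm_commute algebra_simps)

lemma Lambda1_summand_eq:
  assumes "(s, t, u, v) \<in> quads"
  shows "(case (SOME (a, b, c, d). {{s, t}, {u, v}} = {{a, b}, {c, d}}
            \<and> adj a b \<and> adj c d \<and> distinct [a, b, c, d])
          of (a, b, c, d) \<Rightarrow> lam_term V adj a b c d) = lam_term V adj s t u v"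
proof (rule someI2[of _ "(s, t, u, v)"])
  show "case (s, t, u, v) of (a, b, c, d) \<Rightarrow> {{s, t}, {u, v}} = {{a, b}, {c, d}}
      \<and> adj a b \<and> adj c d \<and> distinct [a, b, c, d]"
    using assms by (simp add: quads_def)
  fix q assume "case q of (a, b, c, d) \<Rightarrow> {{s, t}, {u, v}} = {{a, b}, {c, d}}
      \<and> adj a b \<and> adj c d \<and> distinct [a, b, c, d]"
  then show "(case q of (a, b, c, d) \<Rightarrow> lam_term V adj a b c d) = lam_term V adj s t u v"
    using lam_term_relabelling
    by (cases q) (auto simp: eq_commute[of "{{s, t}, {u, v}}"] doubleton_pair_eq_iff_relabelling)
qed

lemma eight_Lambda1_eq_sum_quads:
  "8 * Lambda1 V adj = (\<Sum>(s, t, u, v)\<in>quads. lam_term V adj s t u v)"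
proof -
  let ?pairing = "\<lambda>(s, t, u, v). {{s, t}, {u, v}}"
  have "(\<Sum>(s, t, u, v)\<in>quads. lam_term V adj s t u v) = of_nat 8 * (\<Sum>q\<in>?pairing ` quads.
      (case (SOME (s, t, u, v). q = {{s, t}, {u, v}} \<and> adj s t \<and> adj u v \<and> distinct [s, t, u, v])
       of (s, t, u, v) \<Rightarrow> lam_term V adj s t u v))"
  proof (rule sum_image_const_fibres[OF finite_quads])
    fix p assume "p \<in> quads"
    then obtain s t u v where p: "p = (s, t, u, v)" "(s, t, u, v) \<in> quads"
      by (cases p) auto
    then have "distinct [s, t, u, v]"
      by (simp add: quads_def)
    then show "card {q \<in> quads. ?pairing q = ?pairing p} = 8"
      using quads_fibre[OF p(2)] card_relabellings p(1) by simp
    show "(case (SOME (s, t, u, v). ?pairing p = {{s, t}, {u, v}}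
            \<and> adj s t \<and> adj u v \<and> distinct [s, t, u, v])
          of (s, t, u, v) \<Rightarrow> lam_term V adj s t u v) = (case p of (s, t, u, v) \<Rightarrow> lam_term V adj s t u v)"
      using Lambda1_summand_eq[OF p(2)] p(1) by simp
  qed
  then show ?thesis
    by (simp add: Lambda1_def Qpairs_eq_image_quads)
qed

definition path_term :: "'a \<times> 'a \<times> 'a \<times> 'a \<Rightarrow> int" where
  "path_term = (\<lambda>(s, t, u, v). adjm adj s u * deg V adj t)"

lemma lam_term_eq_sum_path_term:
  "lam_term V adj s t u v = (\<Sum>g\<leftarrow>relabellings. path_term (g (s, t, u, v)))"
  by (simp add: relabellings_def lam_term_def path_term_def adjm_commute algebra_simps)

lemma sum_lam_term_quads:
  "(\<Sum>(s, t, u, v)\<in>quads. lam_term V adj s t u v) = 8 * sum path_term quads"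
proof -
  have "(\<Sum>(s, t, u, v)\<in>quads. lam_term V adj s t u v)
      = (\<Sum>p\<in>quads. \<Sum>g\<leftarrow>relabellings. path_term (g p))"
    by (simp add: case_prod_unfold lam_term_eq_sum_path_term)
  also have "\<dots> = 8 * sum path_term quads"
    using sum_sum_list_bij_betw[OF bij_betw_relabelling, where f = path_term] by (simp add: length_relabellings)
  finally show ?thesis .
qed

definition arc_term :: "'a \<Rightarrow> 'a \<Rightarrow> int" where
  "arc_term s u = (deg V adj u - 1) * (xi V adj s - deg V adj u) - Ssum V adj s u"

lemma edge_term_eq_arc_terms: "edge_term V adj s t = arc_term s t + arc_term t s"
  by (simp add: edge_term_def arc_term_def Ssum_commute)

lemma sum_edge_term_arcs:
  "(\<Sum>(s, t)\<in>arcs. edge_term V adj s t) = 2 * (\<Sum>(s, t)\<in>arcs. arc_term s t)"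
proof -
  have "(\<Sum>(s, t)\<in>arcs. arc_term t s) = (\<Sum>(s, t)\<in>arcs. arc_term s t)"
    by (rule sum.reindex_bij_witness[of _ prod.swap prod.swap]) (auto simp: arcs_def adj_commute)
  then show ?thesis
    by (simp add: edge_term_eq_arc_terms sum.distrib case_prod_unfold)
qed

lemma card_nbhd_Diff_arc:
  assumes "adj s u" "adj s t" "t \<noteq> u"
  shows "int (card (nbhd V adj u - {s, t})) = deg V adj u - 1 - (if adj u t then 1 else 0)"
proof -
  have "s \<in> nbhd V adj u" "t \<noteq> s"
    using assms adj_irrefl by (auto simp: adj_commute)
  have deg_u: "deg V adj u = int (card (nbhd V adj u - {s})) + 1"
    using card.remove[OF finite_nbhd \<open>s \<in> nbhd V adj u\<close>] by (simp add: deg_def)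
  show ?thesis
  proof (cases "adj u t")
    case True
    have "nbhd V adj u - {s, t} = nbhd V adj u - {s} - {t}"
      by blast
    moreover have "card (nbhd V adj u - {s}) = Suc (card (nbhd V adj u - {s} - {t}))"
      using True \<open>t \<noteq> s\<close> by (intro card.remove) auto
    ultimately show ?thesis
      using True by (simp add: deg_u)
  next
    case False
    then have "nbhd V adj u - {s, t} = nbhd V adj u - {s}"
      by auto
    with False show ?thesis
      by (simp add: deg_u)
  qed
qed

lemma sum_paths_through_arc:
  assumes "adj s u"
  shows "(\<Sum>(t, v)\<in>(SIGMA t:nbhd V adj s - {u}. nbhd V adj u - {s, t}). deg V adj t) = arc_term s u"
proof -
  have "(\<Sum>(t, v)\<in>(SIGMA t:nbhd V adj s - {u}. nbhd V adj u - {s, t}). deg V adj t)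
      = (\<Sum>t\<in>nbhd V adj s - {u}. \<Sum>v\<in>nbhd V adj u - {s, t}. deg V adj t)"
    by (rule sum.Sigma[symmetric]) auto
  also have "\<dots>
      = (\<Sum>t\<in>nbhd V adj s - {u}. (deg V adj u - 1) * deg V adj t - (if adj u t then deg V adj t else 0))"
  proof (rule sum.cong[OF refl])
    fix t assume "t \<in> nbhd V adj s - {u}"
    then have "adj s t" "t \<noteq> u"
      by auto
    then show "(\<Sum>v\<in>nbhd V adj u - {s, t}. deg V adj t)
        = (deg V adj u - 1) * deg V adj t - (if adj u t then deg V adj t else 0)"
      by (simp add: card_nbhd_Diff_arc[OF assms] algebra_simps)
  qed
  also have "\<dots> = (deg V adj u - 1) * (\<Sum>t\<in>nbhd V adj s - {u}. deg V adj t)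
      - (\<Sum>t\<in>nbhd V adj s - {u}. if adj u t then deg V adj t else 0)"
    by (simp add: sum_subtractf sum_distrib_left)
  also have "(\<Sum>t\<in>nbhd V adj s - {u}. deg V adj t) = xi V adj s - deg V adj u"
    using assms by (simp add: xi_def sum_diff1)
  also have "(\<Sum>t\<in>nbhd V adj s - {u}. if adj u t then deg V adj t else 0) = Ssum V adj s u"
  proof -
    have "(\<Sum>t\<in>nbhd V adj s - {u}. if adj u t then deg V adj t else 0)
        = sum (deg V adj) {t \<in> nbhd V adj s - {u}. adj u t}"
      by (rule sum.inter_filter[symmetric]) simp
    also have "{t \<in> nbhd V adj s - {u}. adj u t} = common V adj s u"
      using adj_irrefl by (auto simp: common_def)
    finally show ?thesis
      by (simp add: Ssum_def)
  qed
  finally show ?thesis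
    by (simp add: arc_term_def)
qed

lemma sum_path_term_quads: "sum path_term quads = (\<Sum>(s, u)\<in>arcs. arc_term s u)"
proof -
  let ?paths = "SIGMA (s, u):arcs. SIGMA t:nbhd V adj s - {u}. nbhd V adj u - {s, t}"
  have "sum path_term quads = sum path_term {(s, t, u, v)\<in>quads. adj s u}"
    by (rule sum.mono_neutral_right[OF finite_quads]) (auto simp: path_term_def adjm_def split: if_splits)
  also have "\<dots> = (\<Sum>((s, u), (t, v))\<in>?paths. deg V adj t)"
    by (rule sum.reindex_bij_witness[of _ "\<lambda>((s, u), (t, v)). (s, t, u, v)" "\<lambda>(s, t, u, v). ((s, u), (t, v))"])
      (use adj_irrefl in \<open>auto simp: arcs_def quads_def adj_commute path_term_def adjm_def\<close>)
  also have "\<dots> = (\<Sum>(s, u)\<in>arcs. arc_term s u)"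
    by (subst sum.Sigma[OF finite_arcs, symmetric])
      (auto intro!: sum.cong simp: arcs_def sum_paths_through_arc)
  finally show ?thesis .
qed

end

theorem proposition14:
  fixes V :: "'a set" and adj :: "'a \<Rightarrow> 'a \<Rightarrow> bool"
  assumes "finite V"
    and "\<And>x y. adj x y \<Longrightarrow> adj y x"
    and "\<And>x. \<not> adj x x"
    and "\<And>x y. adj x y \<Longrightarrow> x \<in> V \<and> y \<in> V"
  shows "Lambda1 V adj =
    (\<Sum>e\<in>edges V adj. (case (SOME (s, t). e = {s, t} \<and> adj s t) of (s, t) \<Rightarrow> edge_term V adj s t))"
proof -
  interpret finite_simple_graph V adj
    by standard (fact assms)+
  have "8 * Lambda1 V adj = 8 * (\<Sum>(s, u)\<in>arcs. arc_term s u)"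
    by (simp add: eight_Lambda1_eq_sum_quads sum_lam_term_quads sum_path_term_quads)
  moreover have "2 * (\<Sum>e\<in>edges V adj. (case (SOME (s, t). e = {s, t} \<and> adj s t) of (s, t) \<Rightarrow> edge_term V adj s t))
      = 2 * (\<Sum>(s, u)\<in>arcs. arc_term s u)"
    by (simp add: double_sum_edges_eq_sum_arcs sum_edge_term_arcs)
  ultimately show ?thesis
    by simp
qed

end
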